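(* In the continuous-time scaled model described in the context, assume $x^N_0+y^N_0=T$ for all $N$. Let $\hat S_N=N^{1/4}(T-\mathcal N^N_{\tau_N})$ and $S_N=N^{1/4}(T-\tau_N)$. Then $$E\big[|\hat S_N-S_N|^2\big]\le T\,N^{-1/2}.$$ Consequently, if one of the families $(\hat S_N)_{N>0}$, $(S_N)_{N>0}$ converges in distribution to a random variable $S$, then so does the other.
   Context: Continuous-time model: $(X_t,Y_t)_{t\ge0}$ is a pure-jump Markov process with nonnegative integer values. Jumps occur at the times of a rate-one Poisson process $(\mathcal N_t)$. At a jump time $t'$, with $q=X_{t'-}/(X_{t'-}+Y_{t'-})$: with probability $q$, $Y$ decreases by $1$; with probability $1-q$, $X$ decreases by $1$. The process is stopped when one coordinate reaches $0$. Scaling: $x^N_t=N^{-1}X_{Nt}$, $y^N_t=N^{-1}Y_{Nt}$, $\mathcal N^N_t=N^{-1}\mathcal N_{Nt}$; the scaled ruin time is $\tau_N=\inf\{t>0: x^N_t\wedge y^N_t=0\}$ (so $\tau_N\le T$). *)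

theory Defs
  imports "HOL-Probability.Probability"
begin

text \<open>Randomness: holding times E k (i.i.d. Exp(1)) generate the rate-one Poisson
  clock; U k (i.i.d. uniform on [0,1]) decide the direction of the k-th jump.\<close>

text \<open>Time of the k-th jump of the Poisson clock (jumps numbered 1,2,...).\<close>
definition jump_time :: "(nat \<Rightarrow> 'a \<Rightarrow> real) \<Rightarrow> nat \<Rightarrow> 'a \<Rightarrow> real" where
  "jump_time E k \<omega> = (\<Sum>i<k. E i \<omega>)"

definition poisson_count :: "(nat \<Rightarrow> 'a \<Rightarrow> real) \<Rightarrow> real \<Rightarrow> 'a \<Rightarrow> nat" where
  "poisson_count E t \<omega> = card {k. 1 \<le> k \<and> jump_time E k \<omega> \<le> t}"

fun jump_chain :: "nat \<Rightarrow> nat \<Rightarrow> (nat \<Rightarrow> 'a \<Rightarrow> real) \<Rightarrow> nat \<Rightarrow> 'a \<Rightarrow> nat \<times> nat" where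
  "jump_chain X0 Y0 U 0 \<omega> = (X0, Y0)"
| "jump_chain X0 Y0 U (Suc k) \<omega> =
     (let (x, y) = jump_chain X0 Y0 U k \<omega> in
      if x = 0 \<or> y = 0 then (x, y)
      else if U k \<omega> < real x / real (x + y) then (x, y - 1) else (x - 1, y))"

definition proc_X :: "nat \<Rightarrow> nat \<Rightarrow> (nat \<Rightarrow> 'a \<Rightarrow> real) \<Rightarrow> (nat \<Rightarrow> 'a \<Rightarrow> real) \<Rightarrow> real \<Rightarrow> 'a \<Rightarrow> nat" where
  "proc_X X0 Y0 E U t \<omega> = fst (jump_chain X0 Y0 U (poisson_count E t \<omega>) \<omega>)"

definition proc_Y :: "nat \<Rightarrow> nat \<Rightarrow> (nat \<Rightarrow> 'a \<Rightarrow> real) \<Rightarrow> (nat \<Rightarrow> 'a \<Rightarrow> real) \<Rightarrow> real \<Rightarrow> 'a \<Rightarrow> nat" where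
  "proc_Y X0 Y0 E U t \<omega> = snd (jump_chain X0 Y0 U (poisson_count E t \<omega>) \<omega>)"

definition scaled_x :: "nat \<Rightarrow> nat \<Rightarrow> nat \<Rightarrow> (nat \<Rightarrow> 'a \<Rightarrow> real) \<Rightarrow> (nat \<Rightarrow> 'a \<Rightarrow> real) \<Rightarrow> real \<Rightarrow> 'a \<Rightarrow> real" where
  "scaled_x N X0 Y0 E U t \<omega> = real (proc_X X0 Y0 E U (real N * t) \<omega>) / real N"

definition scaled_y :: "nat \<Rightarrow> nat \<Rightarrow> nat \<Rightarrow> (nat \<Rightarrow> 'a \<Rightarrow> real) \<Rightarrow> (nat \<Rightarrow> 'a \<Rightarrow> real) \<Rightarrow> real \<Rightarrow> 'a \<Rightarrow> real" where
  "scaled_y N X0 Y0 E U t \<omega> = real (proc_Y X0 Y0 E U (real N * t) \<omega>) / real N"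

definition scaled_count :: "nat \<Rightarrow> (nat \<Rightarrow> 'a \<Rightarrow> real) \<Rightarrow> real \<Rightarrow> 'a \<Rightarrow> real" where
  "scaled_count N E t \<omega> = real (poisson_count E (real N * t) \<omega>) / real N"

definition ruin_time :: "nat \<Rightarrow> nat \<Rightarrow> nat \<Rightarrow> (nat \<Rightarrow> 'a \<Rightarrow> real) \<Rightarrow> (nat \<Rightarrow> 'a \<Rightarrow> real) \<Rightarrow> 'a \<Rightarrow> real" where
  "ruin_time N X0 Y0 E U \<omega> =
     Inf {t. 0 < t \<and> min (scaled_x N X0 Y0 E U t \<omega>) (scaled_y N X0 Y0 E U t \<omega>) = 0}"

end

theory Submission
  imports Defs "HOL-Real_Asymp.Real_Asymp"
begin

text \<open>Ruin happens exactly at a jump of the Poisson clock: if K is the number of steps the embedded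
  chain needs to hit an axis and J k is the k-th jump time, then tau_N = J K / N and the scaled
  Poisson count at tau_N is K / N, so that Shat_N - S_N = N^(-3/4) (J K - K). The index K depends
  only on the direction variables U, hence is independent of the holding times, and J k - k is a
  centred Gamma(k) variable with variance k. Therefore E (J K - K)^2 = E K <= X0 + Y0 = N T, which
  is the L^2 bound. Two sequences whose L^2 distance tends to zero have the same limits in
  distribution, as one checks on the Lipschitz test functions cts_step.\<close>

section \<open>Weak convergence under perturbations that are small in L^2\<close>

lemma (in prob_space) square_expectation_le:
  fixes g :: "'a \<Rightarrow> real"
  assumes "integrable M g" "integrable M (\<lambda>x. (g x)\<^sup>2)"
  shows "(expectation g)\<^sup>2 \<le> expectation (\<lambda>x. (g x)\<^sup>2)"
  using variance_eq[OF assms] variance_positive[of g] by simp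

lemma cts_step_Lipschitz:
  assumes "a < b"
  shows "\<bar>cts_step a b x - cts_step a b y\<bar> \<le> \<bar>x - y\<bar> / (b - a)"
proof -
  have clip: "cts_step a b z = max 0 (min 1 ((b - z) / (b - a)))" for z
    using assms by (auto simp: cts_step_def field_simps)
  have "\<bar>max 0 (min 1 u) - max 0 (min 1 v)\<bar> \<le> \<bar>u - v\<bar>" for u v :: real
    by (auto simp: max_def min_def)
  from this[of "(b - x) / (b - a)" "(b - y) / (b - a)"]
  show ?thesis
    using assms by (simp add: clip diff_divide_distrib[symmetric] abs_minus_commute)
qed

lemma (in prob_space) abs_expectation_diff_le_Lipschitz:
  fixes A B :: "'a \<Rightarrow> real" and f :: "real \<Rightarrow> real"
  assumes [measurable]: "A \<in> borel_measurable M" "B \<in> borel_measurable M" "f \<in> borel_measurable borel"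
    and bounded: "\<And>z. \<bar>f z\<bar> \<le> C"
    and Lipschitz: "\<And>a b. \<bar>f a - f b\<bar> \<le> L * \<bar>a - b\<bar>" and "0 \<le> L"
    and close: "(\<integral>\<^sup>+\<omega>. ennreal ((A \<omega> - B \<omega>)\<^sup>2) \<partial>M) \<le> ennreal c" and "0 \<le> c"
  shows "\<bar>expectation (\<lambda>\<omega>. f (A \<omega>)) - expectation (\<lambda>\<omega>. f (B \<omega>))\<bar> \<le> L * sqrt c"
proof -
  define g where "g \<omega> = \<bar>f (A \<omega>) - f (B \<omega>)\<bar>" for \<omega>
  have g_bounded: "\<bar>g \<omega>\<bar> \<le> 2 * C" for \<omega>
    using bounded[of "A \<omega>"] bounded[of "B \<omega>"] by (simp add: g_def)
  have int_fA: "integrable M (\<lambda>\<omega>. f (A \<omega>))" and int_fB: "integrable M (\<lambda>\<omega>. f (B \<omega>))"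
    using bounded by (auto intro!: integrable_const_bound[of _ C])
  have g2_bounded: "\<bar>(g \<omega>)\<^sup>2\<bar> \<le> (2 * C)\<^sup>2" for \<omega>
    using power_mono[OF g_bounded[of \<omega>], of 2] by simp
  have int_g: "integrable M g"
    using g_bounded unfolding g_def by (auto intro!: integrable_const_bound[of _ "2 * C"])
  have int_g2: "integrable M (\<lambda>\<omega>. (g \<omega>)\<^sup>2)"
    using g2_bounded unfolding g_def by (auto intro!: integrable_const_bound[of _ "(2 * C)\<^sup>2"])
  have g2_le: "expectation (\<lambda>\<omega>. (g \<omega>)\<^sup>2) \<le> L\<^sup>2 * c"
  proof (rule integral_real_bounded)
    have "(\<integral>\<^sup>+\<omega>. ennreal ((g \<omega>)\<^sup>2) \<partial>M) \<le> (\<integral>\<^sup>+\<omega>. ennreal (L\<^sup>2) * ennreal ((A \<omega> - B \<omega>)\<^sup>2) \<partial>M)"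
    proof (rule nn_integral_mono)
      fix \<omega>
      have "(g \<omega>)\<^sup>2 \<le> (L * \<bar>A \<omega> - B \<omega>\<bar>)\<^sup>2"
        unfolding g_def by (intro power_mono Lipschitz) simp
      then show "ennreal ((g \<omega>)\<^sup>2) \<le> ennreal (L\<^sup>2) * ennreal ((A \<omega> - B \<omega>)\<^sup>2)"
        by (simp add: ennreal_mult[symmetric] power_mult_distrib)
    qed
    also have "\<dots> = ennreal (L\<^sup>2) * (\<integral>\<^sup>+\<omega>. ennreal ((A \<omega> - B \<omega>)\<^sup>2) \<partial>M)"
      by (rule nn_integral_cmult) measurable
    also have "\<dots> \<le> ennreal (L\<^sup>2 * c)"
      using close \<open>0 \<le> c\<close> by (simp add: ennreal_mult mult_left_mono)
    finally show "(\<integral>\<^sup>+\<omega>. ennreal ((g \<omega>)\<^sup>2) \<partial>M) \<le> ennreal (L\<^sup>2 * c)" .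
  qed (use \<open>0 \<le> c\<close> in simp)
  have "\<bar>expectation (\<lambda>\<omega>. f (A \<omega>)) - expectation (\<lambda>\<omega>. f (B \<omega>))\<bar> \<le> expectation g"
    using integral_norm_bound[of M "\<lambda>\<omega>. f (A \<omega>) - f (B \<omega>)"] int_fA int_fB by (simp add: g_def[abs_def])
  also have "expectation g \<le> sqrt (L\<^sup>2 * c)"
    using square_expectation_le[OF int_g int_g2] g2_le by (intro real_le_rsqrt) simp
  also have "\<dots> = L * sqrt c"
    using \<open>0 \<le> L\<close> by (simp add: real_sqrt_mult)
  finally show ?thesis .
qed

lemma weak_conv_m_of_L2_close:
  fixes A B :: "nat \<Rightarrow> 'a \<Rightarrow> real"
  assumes "prob_space M"
    and [measurable]: "\<And>n. A n \<in> borel_measurable M" "\<And>n. B n \<in> borel_measurable M"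
    and "real_distribution \<mu>"
    and close: "\<And>n. 0 < n \<Longrightarrow> (\<integral>\<^sup>+\<omega>. ennreal ((A n \<omega> - B n \<omega>)\<^sup>2) \<partial>M) \<le> ennreal (c n)"
    and c_nonneg: "\<And>n. 0 \<le> c n" and "c \<longlonglongrightarrow> 0"
    and A_conv: "weak_conv_m (\<lambda>n. distr M borel (A n)) \<mu>"
  shows "weak_conv_m (\<lambda>n. distr M borel (B n)) \<mu>"
proof -
  interpret prob_space M by fact
  show ?thesis
  proof (rule integral_cts_step_conv_imp_weak_conv[OF _ \<open>real_distribution \<mu>\<close>])
    fix x y :: real
    assume "x < y"
    let ?f = "cts_step x y"
    have f_bounded: "\<bar>?f z\<bar> \<le> 1" for z
      using \<open>x < y\<close> by (auto simp: cts_step_def field_simps)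
    have f_cont: "isCont ?f z" for z
      by (rule continuous_on_interior[of UNIV], rule uniformly_continuous_imp_continuous,
          rule cts_step_uniformly_continuous[OF \<open>x < y\<close>]) auto
    then have f_meas[measurable]: "?f \<in> borel_measurable borel"
      by (intro borel_measurable_continuous_onI continuous_at_imp_continuous_on) auto
    have "(\<lambda>n. integral\<^sup>L (distr M borel (A n)) ?f) \<longlonglongrightarrow> integral\<^sup>L \<mu> ?f"
      by (rule weak_conv_imp_integral_bdd_continuous_conv[OF _ \<open>real_distribution \<mu>\<close> A_conv, of _ 1])
        (use f_cont f_bounded in auto)
    then have "(\<lambda>n. expectation (\<lambda>\<omega>. ?f (A n \<omega>))) \<longlonglongrightarrow> integral\<^sup>L \<mu> ?f"
      by (simp add: integral_distr)
    moreover have "(\<lambda>n. expectation (\<lambda>\<omega>. ?f (B n \<omega>)) - expectation (\<lambda>\<omega>. ?f (A n \<omega>))) \<longlonglongrightarrow> 0"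
    proof (rule Lim_null_comparison)
      have "(\<lambda>n. 1 / (y - x) * sqrt (c n)) \<longlonglongrightarrow> 1 / (y - x) * sqrt 0"
        by (intro tendsto_intros \<open>c \<longlonglongrightarrow> 0\<close>)
      then show "(\<lambda>n. 1 / (y - x) * sqrt (c n)) \<longlonglongrightarrow> 0" by simp
      show "\<forall>\<^sub>F n in sequentially.
          norm (expectation (\<lambda>\<omega>. ?f (B n \<omega>)) - expectation (\<lambda>\<omega>. ?f (A n \<omega>))) \<le> 1 / (y - x) * sqrt (c n)"
      proof (rule eventually_sequentiallyI[of 1])
        fix n :: nat assume "1 \<le> n"
        have "\<bar>expectation (\<lambda>\<omega>. ?f (A n \<omega>)) - expectation (\<lambda>\<omega>. ?f (B n \<omega>))\<bar> \<le> 1 / (y - x) * sqrt (c n)"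
          using cts_step_Lipschitz[OF \<open>x < y\<close>] \<open>x < y\<close> \<open>1 \<le> n\<close>
          by (intro abs_expectation_diff_le_Lipschitz[OF _ _ _ f_bounded _ _ close c_nonneg]) auto
        then show "norm (expectation (\<lambda>\<omega>. ?f (B n \<omega>)) - expectation (\<lambda>\<omega>. ?f (A n \<omega>))) \<le> 1 / (y - x) * sqrt (c n)"
          by (simp add: abs_minus_commute)
      qed
    qed
    ultimately have "(\<lambda>n. (expectation (\<lambda>\<omega>. ?f (B n \<omega>)) - expectation (\<lambda>\<omega>. ?f (A n \<omega>)))
                          + expectation (\<lambda>\<omega>. ?f (A n \<omega>))) \<longlonglongrightarrow> 0 + integral\<^sup>L \<mu> ?f"
      by (intro tendsto_add)
    then show "(\<lambda>n. integral\<^sup>L (distr M borel (B n)) ?f) \<longlonglongrightarrow> integral\<^sup>L \<mu> ?f"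
      by (simp add: integral_distr)
  qed simp
qed

section \<open>The embedded jump chain and the ruin index\<close>

definition chain_stopped :: "nat \<Rightarrow> nat \<Rightarrow> (nat \<Rightarrow> 'a \<Rightarrow> real) \<Rightarrow> nat \<Rightarrow> 'a \<Rightarrow> bool" where
  "chain_stopped X0 Y0 U k \<omega> \<longleftrightarrow>
     fst (jump_chain X0 Y0 U k \<omega>) = 0 \<or> snd (jump_chain X0 Y0 U k \<omega>) = 0"

lemma jump_chain_Suc_stopped:
  "chain_stopped X0 Y0 U k \<omega> \<Longrightarrow> jump_chain X0 Y0 U (Suc k) \<omega> = jump_chain X0 Y0 U k \<omega>"
  by (cases "jump_chain X0 Y0 U k \<omega>") (auto simp: chain_stopped_def)

lemma chain_stopped_absorbing:
  assumes "chain_stopped X0 Y0 U k \<omega>" "k \<le> m"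
  shows "chain_stopped X0 Y0 U m \<omega> \<and> jump_chain X0 Y0 U m \<omega> = jump_chain X0 Y0 U k \<omega>"
  using assms(2,1)
proof (induction m rule: dec_induct)
  case (step m)
  then show ?case
    using jump_chain_Suc_stopped[of X0 Y0 U m \<omega>] by (simp add: chain_stopped_def)
qed simp

lemma jump_chain_sum_steps:
  "\<not> chain_stopped X0 Y0 U k \<omega> \<Longrightarrow>
     fst (jump_chain X0 Y0 U k \<omega>) + snd (jump_chain X0 Y0 U k \<omega>) + k = X0 + Y0"
proof (induction k)
  case (Suc k)
  have running: "\<not> chain_stopped X0 Y0 U k \<omega>"
    using Suc.prems chain_stopped_absorbing[of X0 Y0 U k \<omega> "Suc k"] by auto
  obtain x y where xy: "jump_chain X0 Y0 U k \<omega> = (x, y)" by fastforce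
  with running Suc.IH show ?case
    by (simp add: chain_stopped_def, arith)
qed simp

lemma chain_stopped_total: "chain_stopped X0 Y0 U (X0 + Y0) \<omega>"
proof (rule ccontr)
  assume "\<not> chain_stopped X0 Y0 U (X0 + Y0) \<omega>"
  with jump_chain_sum_steps[OF this] show False by (simp add: chain_stopped_def)
qed

definition ruin_index :: "nat \<Rightarrow> nat \<Rightarrow> (nat \<Rightarrow> 'a \<Rightarrow> real) \<Rightarrow> 'a \<Rightarrow> nat" where
  "ruin_index X0 Y0 U \<omega> = (LEAST k. chain_stopped X0 Y0 U k \<omega>)"

lemma chain_stopped_ruin_index: "chain_stopped X0 Y0 U (ruin_index X0 Y0 U \<omega>) \<omega>"
  unfolding ruin_index_def by (rule LeastI[of _ "X0 + Y0"]) (rule chain_stopped_total)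

lemma ruin_index_le: "ruin_index X0 Y0 U \<omega> \<le> X0 + Y0"
  unfolding ruin_index_def by (rule Least_le) (rule chain_stopped_total)

lemma not_chain_stopped_less_ruin_index:
  "k < ruin_index X0 Y0 U \<omega> \<Longrightarrow> \<not> chain_stopped X0 Y0 U k \<omega>"
  unfolding ruin_index_def by (rule not_less_Least)

lemma jump_chain_sequence:
  "jump_chain X0 Y0 (\<lambda>i u. u i) k (\<lambda>i. U i \<omega>) = jump_chain X0 Y0 U k \<omega>"
  by (induction k) (simp_all add: Let_def case_prod_beta)

lemma ruin_index_sequence:
  "ruin_index X0 Y0 (\<lambda>i u. u i) (\<lambda>i. U i \<omega>) = ruin_index X0 Y0 U \<omega>"
  by (simp add: ruin_index_def chain_stopped_def jump_chain_sequence)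

lemma jump_chain_measurable[measurable]:
  assumes [measurable]: "\<And>k. U k \<in> borel_measurable M"
  shows "jump_chain X0 Y0 U k \<in> measurable M (count_space UNIV)"
proof (induction k)
  case (Suc k)
  define step where "step s \<omega> =
      (if fst s = 0 \<or> snd s = 0 then s
       else if U k \<omega> < real (fst s) / real (fst s + snd s) then (fst s, snd s - 1)
       else (fst s - 1, snd s))" for s :: "nat \<times> nat" and \<omega>
  have "step s \<in> measurable M (count_space UNIV)" for s
    unfolding step_def by measurable
  then have "(\<lambda>\<omega>. step (jump_chain X0 Y0 U k \<omega>) \<omega>) \<in> measurable M (count_space UNIV)"
    by (rule measurable_compose_countable'[OF _ Suc]) simp
  moreover have "(\<lambda>\<omega>. step (jump_chain X0 Y0 U k \<omega>) \<omega>) = jump_chain X0 Y0 U (Suc k)"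
    by (simp add: fun_eq_iff step_def Let_def case_prod_beta)
  ultimately show ?case by metis
qed simp

lemma chain_stopped_measurable[measurable]:
  assumes [measurable]: "\<And>k. U k \<in> borel_measurable M"
  shows "Measurable.pred M (chain_stopped X0 Y0 U k)"
  unfolding chain_stopped_def[abs_def] by measurable

lemma ruin_index_measurable[measurable]:
  assumes [measurable]: "\<And>k. U k \<in> borel_measurable M"
  shows "ruin_index X0 Y0 U \<in> measurable M (count_space UNIV)"
  unfolding ruin_index_def[abs_def] by measurable

section \<open>Jump times and the ruin time\<close>

lemma jump_time_0[simp]: "jump_time E 0 \<omega> = 0"
  by (simp add: jump_time_def)

lemma jump_time_Suc: "jump_time E (Suc k) \<omega> = jump_time E k \<omega> + E k \<omega>"
  by (simp add: jump_time_def)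

lemma strict_mono_jump_time:
  assumes "\<And>i. 0 < E i \<omega>"
  shows "strict_mono (\<lambda>k. jump_time E k \<omega>)"
  using assms by (intro strict_mono_Suc_iff[THEN iffD2]) (simp add: jump_time_Suc)

lemma poisson_count_jump_time:
  assumes "\<And>i. 0 < E i \<omega>"
  shows "poisson_count E (jump_time E k \<omega>) \<omega> = k"
proof -
  have "{j. 1 \<le> j \<and> jump_time E j \<omega> \<le> jump_time E k \<omega>} = {1..k}"
    using strict_mono_less_eq[OF strict_mono_jump_time[of E \<omega>, OF assms]] by auto
  then show ?thesis by (simp add: poisson_count_def)
qed

lemma poisson_count_less:
  assumes "\<And>i. 0 < E i \<omega>" and "0 < k" "t < jump_time E k \<omega>"
  shows "poisson_count E t \<omega> < k"
proof -
  have "j < k" if "jump_time E j \<omega> \<le> t" for j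
  proof (rule ccontr)
    assume "\<not> j < k"
    then have "jump_time E k \<omega> \<le> jump_time E j \<omega>"
      using strict_mono_less_eq[OF strict_mono_jump_time[of E \<omega>, OF assms(1)]] by simp
    with that \<open>t < jump_time E k \<omega>\<close> show False by simp
  qed
  then have "{j. 1 \<le> j \<and> jump_time E j \<omega> \<le> t} \<subseteq> {1..<k}"
    by auto
  then have "poisson_count E t \<omega> \<le> card {1..<k}"
    unfolding poisson_count_def by (intro card_mono) auto
  with \<open>0 < k\<close> show ?thesis by simp
qed

lemma jump_time_measurable[measurable]:
  assumes [measurable]: "\<And>k. E k \<in> borel_measurable M"
  shows "jump_time E k \<in> borel_measurable M"
  unfolding jump_time_def[abs_def] by measurable

lemma poisson_count_measurable[measurable]:
  assumes [measurable]: "\<And>k. E k \<in> borel_measurable M" "g \<in> borel_measurable M"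
  shows "(\<lambda>\<omega>. poisson_count E (g \<omega>) \<omega>) \<in> measurable M (count_space UNIV)"
  unfolding poisson_count_def
proof (rule measurable_card)
  fix i
  have "Measurable.pred M (\<lambda>\<omega>. 1 \<le> i \<and> jump_time E i \<omega> \<le> g \<omega>)" by measurable
  then show "{\<omega> \<in> space M. i \<in> {k. 1 \<le> k \<and> jump_time E k \<omega> \<le> g \<omega>}} \<in> sets M"
    by (simp add: pred_def)
qed

lemma ruin_time_eq_Inf_stopped:
  assumes "0 < N"
  shows "ruin_time N X0 Y0 E U \<omega> =
           Inf {t. 0 < t \<and> chain_stopped X0 Y0 U (poisson_count E (real N * t) \<omega>) \<omega>}"
proof -
  have "min (real a / real N) (real b / real N) = 0 \<longleftrightarrow> a = 0 \<or> b = 0" for a b :: nat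
    using assms by (cases "a \<le> b") (auto simp: min_def divide_le_0_iff divide_le_cancel)
  then show ?thesis
    by (simp add: ruin_time_def scaled_x_def scaled_y_def proc_X_def proc_Y_def chain_stopped_def)
qed

lemma ruin_time_eq_jump_time:
  assumes pos: "\<And>i. 0 < E i \<omega>" and "0 < N"
  shows "ruin_time N X0 Y0 E U \<omega> = jump_time E (ruin_index X0 Y0 U \<omega>) \<omega> / real N"
proof -
  define K where "K = ruin_index X0 Y0 U \<omega>"
  define R where "R = {t. 0 < t \<and> chain_stopped X0 Y0 U (poisson_count E (real N * t) \<omega>) \<omega>}"
  have "Inf R = jump_time E K \<omega> / real N"
  proof (cases "K = 0")
    case True
    then have "chain_stopped X0 Y0 U 0 \<omega>"
      using chain_stopped_ruin_index[of X0 Y0 U \<omega>] by (simp add: K_def)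
    then have "R = {0<..}"
      using chain_stopped_absorbing[of X0 Y0 U 0 \<omega>] by (auto simp: R_def)
    with True show ?thesis by simp
  next
    case False
    show ?thesis
    proof (rule cInf_eq_minimum)
      have "0 < jump_time E K \<omega>"
        using strict_monoD[OF strict_mono_jump_time[of E \<omega>, OF pos], of 0 K] False by simp
      then show "jump_time E K \<omega> / real N \<in> R"
        using \<open>0 < N\<close> chain_stopped_ruin_index[of X0 Y0 U \<omega>]
        by (simp add: R_def K_def poisson_count_jump_time[of E \<omega>, OF pos])
    next
      fix t assume "t \<in> R"
      show "jump_time E K \<omega> / real N \<le> t"
      proof (rule ccontr)
        assume "\<not> ?thesis"
        then have "real N * t < jump_time E K \<omega>" using \<open>0 < N\<close> by (simp add: field_simps)
        then have "poisson_count E (real N * t) \<omega> < K"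
          using False by (intro poisson_count_less[of E \<omega>, OF pos]) auto
        with \<open>t \<in> R\<close> show False
          using not_chain_stopped_less_ruin_index[of _ X0 Y0 U \<omega>] by (auto simp: R_def K_def)
      qed
    qed
  qed
  then show ?thesis by (simp add: ruin_time_eq_Inf_stopped[OF \<open>0 < N\<close>] R_def K_def)
qed

lemma poisson_count_ruin_time:
  assumes "\<And>i. 0 < E i \<omega>" and "0 < N"
  shows "poisson_count E (real N * ruin_time N X0 Y0 E U \<omega>) \<omega> = ruin_index X0 Y0 U \<omega>"
  using assms by (simp add: ruin_time_eq_jump_time poisson_count_jump_time)

section \<open>Measurability of the ruin time\<close>

lemma borel_measurable_Inf_image_Collect:
  fixes f :: "'i::countable \<Rightarrow> 'a \<Rightarrow> real"
  assumes [measurable]: "\<And>i. f i \<in> borel_measurable M" "\<And>i. Measurable.pred M (P i)"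
    and bounded: "\<And>i \<omega>. P i \<omega> \<Longrightarrow> b \<le> f i \<omega>"
  shows "(\<lambda>\<omega>. Inf ((\<lambda>i. f i \<omega>) ` {i. P i \<omega>})) \<in> borel_measurable M"
proof (rule borel_measurable_iff_less[THEN iffD2], intro allI)
  fix a :: real
  have "Inf ((\<lambda>i. f i \<omega>) ` {i. P i \<omega>}) < a \<longleftrightarrow>
          (\<exists>i. P i \<omega> \<and> f i \<omega> < a) \<or> ((\<forall>i. \<not> P i \<omega>) \<and> Inf ({} :: real set) < a)" for \<omega>
  proof (cases "\<exists>i. P i \<omega>")
    case True
    have "bdd_below ((\<lambda>i. f i \<omega>) ` {i. P i \<omega>})"
      using bounded by (auto intro: bdd_belowI[of _ b])
    with True show ?thesis by (subst cInf_less_iff) auto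
  qed simp
  moreover have "Measurable.pred M (\<lambda>\<omega>. (\<exists>i. P i \<omega> \<and> f i \<omega> < a) \<or> ((\<forall>i. \<not> P i \<omega>) \<and> Inf ({} :: real set) < a))"
    by measurable
  ultimately show "{\<omega> \<in> space M. Inf ((\<lambda>i. f i \<omega>) ` {i. P i \<omega>}) < a} \<in> sets M"
    by (simp add: pred_def)
qed

text \<open>Since the Poisson count is constant
  between the last jump before N t and N t, the infimum may be taken over the countably many jump
  times and rational times only, which makes it measurable.\<close>

definition candidate_time :: "nat \<Rightarrow> (nat \<Rightarrow> 'a \<Rightarrow> real) \<Rightarrow> nat + rat \<Rightarrow> 'a \<Rightarrow> real" where
  "candidate_time N E i \<omega> = (case i of Inl k \<Rightarrow> jump_time E k \<omega> / real N | Inr q \<Rightarrow> of_rat q)"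

lemma exists_candidate_time_le:
  assumes "0 < N" "0 < t" and stopped: "chain_stopped X0 Y0 U (poisson_count E (real N * t) \<omega>) \<omega>"
  shows "\<exists>i. 0 < candidate_time N E i \<omega> \<and>
             chain_stopped X0 Y0 U (poisson_count E (real N * candidate_time N E i \<omega>) \<omega>) \<omega> \<and>
             candidate_time N E i \<omega> \<le> t"
proof (cases "poisson_count E (real N * t) \<omega> = 0")
  case True
  obtain q where q: "0 < (of_rat q :: real)" "of_rat q < t"
    using of_rat_dense[OF \<open>0 < t\<close>] by blast
  have "chain_stopped X0 Y0 U (poisson_count E (real N * of_rat q) \<omega>) \<omega>"
    using chain_stopped_absorbing[of X0 Y0 U 0 \<omega>] stopped True by simp
  with q show ?thesis by (intro exI[of _ "Inr q"]) (simp add: candidate_time_def)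
next
  case False
  define A where "A = {k. 1 \<le> k \<and> jump_time E k \<omega> \<le> real N * t}"
  have count_A: "poisson_count E (real N * t) \<omega> = card A" by (simp add: A_def poisson_count_def)
  with False have "finite A" "A \<noteq> {}" by (auto intro: card_ge_0_finite)
  show ?thesis
  proof (cases "\<exists>k\<in>A. jump_time E k \<omega> = real N * t")
    case True
    then obtain k where "jump_time E k \<omega> = real N * t" by blast
    with \<open>0 < N\<close> have "candidate_time N E (Inl k) \<omega> = t" by (simp add: candidate_time_def)
    with assms show ?thesis by (intro exI[of _ "Inl k"]) simp
  next
    case False
    define m where "m = Max ((\<lambda>k. jump_time E k \<omega>) ` A)"
    have le_m: "jump_time E k \<omega> \<le> m" if "k \<in> A" for k
      using \<open>finite A\<close> that by (simp add: m_def)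
    have "m \<in> (\<lambda>k. jump_time E k \<omega>) ` A"
      unfolding m_def using \<open>finite A\<close> \<open>A \<noteq> {}\<close> by (intro Max_in) auto
    with False have "m < real N * t" by (auto simp: A_def)
    with \<open>0 < N\<close> \<open>0 < t\<close> have "max (m / real N) 0 < t" by (simp add: field_simps)
    then obtain q where q: "max (m / real N) 0 < of_rat q" "of_rat q < t"
      using of_rat_dense by blast
    with \<open>0 < N\<close> have "m < real N * of_rat q" "real N * of_rat q \<le> real N * t"
      by (simp_all add: field_simps)
    then have "{k. 1 \<le> k \<and> jump_time E k \<omega> \<le> real N * of_rat q} = A"
      using le_m by (force simp: A_def)
    then have "poisson_count E (real N * of_rat q) \<omega> = poisson_count E (real N * t) \<omega>"
      by (simp add: poisson_count_def A_def)
    with q stopped show ?thesis by (intro exI[of _ "Inr q"]) (simp add: candidate_time_def)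
  qed
qed

lemma ruin_time_eq_Inf_candidates:
  assumes "0 < N"
  shows "ruin_time N X0 Y0 E U \<omega> = Inf ((\<lambda>i. candidate_time N E i \<omega>) `
           {i. 0 < candidate_time N E i \<omega> \<and>
               chain_stopped X0 Y0 U (poisson_count E (real N * candidate_time N E i \<omega>) \<omega>) \<omega>})"
    (is "_ = Inf ?C")
proof -
  define R where "R = {t. 0 < t \<and> chain_stopped X0 Y0 U (poisson_count E (real N * t) \<omega>) \<omega>}"
  have "?C \<subseteq> R" by (auto simp: R_def)
  have "bdd_below R" unfolding R_def by (rule bdd_belowI[of _ 0]) auto
  then have "bdd_below ?C" using \<open>?C \<subseteq> R\<close> by (rule bdd_below_mono)
  have lower: "\<exists>c\<in>?C. c \<le> t" if "t \<in> R" for t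
    using exists_candidate_time_le[OF \<open>0 < N\<close>, of t] that by (auto simp: R_def)
  have "Inf R = Inf ?C"
  proof (cases "R = {}")
    case True
    with \<open>?C \<subseteq> R\<close> have "?C = {}" by blast
    with True show ?thesis by (simp only:)
  next
    case False
    with lower have "?C \<noteq> {}" by blast
    show ?thesis
    proof (rule antisym)
      show "Inf R \<le> Inf ?C" by (rule cInf_superset_mono[OF \<open>?C \<noteq> {}\<close> \<open>bdd_below R\<close> \<open>?C \<subseteq> R\<close>])
      show "Inf ?C \<le> Inf R" by (rule cInf_mono[OF False \<open>bdd_below ?C\<close> lower])
    qed
  qed
  then show ?thesis by (simp add: ruin_time_eq_Inf_stopped[OF assms] R_def)
qed

lemma ruin_time_measurable[measurable]:
  assumes [measurable]: "\<And>k. E k \<in> borel_measurable M" "\<And>k. U k \<in> borel_measurable M"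
  shows "ruin_time N X0 Y0 E U \<in> borel_measurable M"
proof (cases "N = 0")
  case True
  \<comment> \<open>the scaled coordinates are then x / 0 = 0, so every positive time is a time of ruin\<close>
  have "{t :: real. 0 < t} = {0<..}" by auto
  with True have "ruin_time N X0 Y0 E U = (\<lambda>_. 0)"
    by (simp add: fun_eq_iff ruin_time_def scaled_x_def scaled_y_def)
  then show ?thesis by simp
next
  case False
  have [measurable]: "candidate_time N E i \<in> borel_measurable M" for i
    by (cases i) (simp_all add: candidate_time_def[abs_def])
  have [measurable]: "Measurable.pred M
      (\<lambda>\<omega>. chain_stopped X0 Y0 U (poisson_count E (real N * candidate_time N E i \<omega>) \<omega>) \<omega>)" for i
    by measurable
  have "ruin_time N X0 Y0 E U = (\<lambda>\<omega>. Inf ((\<lambda>i. candidate_time N E i \<omega>) `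
           {i. 0 < candidate_time N E i \<omega> \<and>
               chain_stopped X0 Y0 U (poisson_count E (real N * candidate_time N E i \<omega>) \<omega>) \<omega>}))"
    using False by (simp add: fun_eq_iff ruin_time_eq_Inf_candidates)
  also have "\<dots> \<in> borel_measurable M"
    by (rule borel_measurable_Inf_image_Collect[where b=0]) auto
  finally show ?thesis .
qed

section \<open>The second moment of the gap between ruin time and Poisson count\<close>

lemma (in prob_space) indep_vars_Inl_of_case_sum:
  assumes "indep_vars (\<lambda>_. borel) (case_sum E U) UNIV"
  shows "indep_vars (\<lambda>_. borel) E I"
proof -
  have "indep_vars (\<lambda>j. PiM {Inl j} (\<lambda>_. borel)) (\<lambda>j \<omega>. restrict (\<lambda>i. case_sum E U i \<omega>) {Inl j}) UNIV"
    by (rule indep_vars_restrict[OF assms]) (auto simp: disjoint_family_on_def)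
  then have "indep_vars (\<lambda>_. borel) (\<lambda>j \<omega>. restrict (\<lambda>i. case_sum E U i \<omega>) {Inl j} (Inl j)) UNIV"
    by (rule indep_vars_compose2) simp
  then have "indep_vars (\<lambda>_. borel) E UNIV"
    by (simp add: fun_eq_iff)
  then show ?thesis
    by (rule indep_vars_subset) simp
qed

lemma (in prob_space) nn_integral_jump_time_deviation_sq:
  assumes indep: "indep_vars (\<lambda>_. borel) E {..<k}"
    and exp: "\<And>i. distributed M lborel (E i) (exponential_density 1)"
  shows "(\<integral>\<^sup>+\<omega>. ennreal ((jump_time E k \<omega> - real k)\<^sup>2) \<partial>M) = ennreal (real k)"
proof (cases "k = 0")
  case False
  define J where "J = jump_time E k"
  have erlang: "distributed M lborel J (erlang_density (k - 1) 1)"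
    unfolding J_def jump_time_def[abs_def]
    using exponential_distributed_sum[of "{..<k}" 1 E] indep exp False by (simp add: lessThan_empty_iff)
  have [measurable]: "J \<in> borel_measurable M"
    using distributed_measurable[OF erlang] by simp
  have "integrable M J" "integrable M (\<lambda>x. (J x)\<^sup>2)"
    using erlang_ith_moment_integrable[OF _ erlang, of 1] erlang_ith_moment_integrable[OF _ erlang, of 2]
    by simp_all
  then have "integrable M (\<lambda>x. (J x)\<^sup>2 - 2 * real k * J x + (real k)\<^sup>2)"
    by auto
  then have integrable: "integrable M (\<lambda>x. (J x - real k)\<^sup>2)"
    by (simp add: power2_diff algebra_simps)
  have "expectation J = real k"
    using erlang_ith_moment[OF _ erlang, of 1] False by (simp add: fact_reduce[of k])
  moreover have "variance J = real k"
    using erlang_distributed_variance[OF _ erlang] False by simp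
  ultimately have "expectation (\<lambda>x. (J x - real k)\<^sup>2) = real k"
    by simp
  with integrable show ?thesis
    unfolding J_def[symmetric] by (subst nn_integral_eq_integral) auto
qed simp

lemma (in prob_space) nn_integral_indep_case_sum_mult:
  fixes E U :: "nat \<Rightarrow> 'a \<Rightarrow> real" and F G :: "(nat \<Rightarrow> real) \<Rightarrow> ennreal"
  assumes indep: "indep_vars (\<lambda>_. borel) (case_sum E U) UNIV"
    and [measurable]: "F \<in> borel_measurable (PiM UNIV (\<lambda>_. borel))"
      "G \<in> borel_measurable (PiM UNIV (\<lambda>_. borel))"
  shows "(\<integral>\<^sup>+\<omega>. F (\<lambda>i. U i \<omega>) * G (\<lambda>i. E i \<omega>) \<partial>M) =
           (\<integral>\<^sup>+\<omega>. F (\<lambda>i. U i \<omega>) \<partial>M) * (\<integral>\<^sup>+\<omega>. G (\<lambda>i. E i \<omega>) \<partial>M)"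
proof -
  let ?R = "\<lambda>A \<omega>. restrict (\<lambda>i. case_sum E U i \<omega>) A"
  have reindex: "(\<lambda>v i. v (f i)) \<in> measurable (PiM (range f) (\<lambda>_. borel)) (PiM UNIV (\<lambda>_. borel))"
    for f :: "nat \<Rightarrow> nat + nat"
    by (rule measurable_PiM_single') simp_all
  have "indep_var (PiM (range Inr) (\<lambda>_. borel)) (?R (range Inr)) (PiM (range Inl) (\<lambda>_. borel)) (?R (range Inl))"
    by (rule indep_var_restrict[OF indep]) auto
  then have "indep_var borel ((\<lambda>v. F (\<lambda>i. v (Inr i))) \<circ> ?R (range Inr))
                       borel ((\<lambda>v. G (\<lambda>i. v (Inl i))) \<circ> ?R (range Inl))"
    by (rule indep_var_compose)
      (rule measurable_compose[OF reindex], simp)+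
  then have "indep_var borel (\<lambda>\<omega>. F (\<lambda>i. U i \<omega>)) borel (\<lambda>\<omega>. G (\<lambda>i. E i \<omega>))"
    by (simp add: comp_def)
  moreover have "case_bool borel borel = (\<lambda>_. borel :: ennreal measure)"
    by (simp add: fun_eq_iff split: bool.split)
  ultimately have "indep_vars (\<lambda>_. borel) (case_bool (\<lambda>\<omega>. F (\<lambda>i. U i \<omega>)) (\<lambda>\<omega>. G (\<lambda>i. E i \<omega>))) UNIV"
    unfolding indep_var_def by simp
  from indep_vars_nn_integral[OF _ this] show ?thesis
    by (simp add: UNIV_bool mult.commute)
qed

lemma (in prob_space) nn_integral_jump_time_ruin_index_sq_le:
  assumes indep: "indep_vars (\<lambda>_. borel) (case_sum E U) UNIV"
    and exp: "\<And>i. distributed M lborel (E i) (exponential_density 1)"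
    and [measurable]: "\<And>k. U k \<in> borel_measurable M"
  shows "(\<integral>\<^sup>+\<omega>. ennreal ((jump_time E (ruin_index X0 Y0 U \<omega>) \<omega> - real (ruin_index X0 Y0 U \<omega>))\<^sup>2) \<partial>M)
           \<le> ennreal (real (X0 + Y0))"
proof -
  define n where "n = X0 + Y0"
  define F where "F k u = (if ruin_index X0 Y0 (\<lambda>i u. u i) u = k then 1 else 0 :: ennreal)"
    for k and u :: "nat \<Rightarrow> real"
  define G where "G k e = ennreal (((\<Sum>i<k. e i) - real k)\<^sup>2)" for k and e :: "nat \<Rightarrow> real"
  have [measurable]: "E k \<in> borel_measurable M" for k
    using distributed_measurable[OF exp] by simp
  have [measurable]: "F k \<in> borel_measurable (PiM UNIV (\<lambda>_. borel))" "G k \<in> borel_measurable (PiM UNIV (\<lambda>_. borel))" for k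
    unfolding F_def G_def by measurable
  have [measurable]: "(\<lambda>\<omega> i. U i \<omega>) \<in> measurable M (PiM UNIV (\<lambda>_. borel))"
    "(\<lambda>\<omega> i. E i \<omega>) \<in> measurable M (PiM UNIV (\<lambda>_. borel))"
    by (rule measurable_PiM_single'; simp)+
  have delta: "(if b then 1 else 0) * x = (if b then x else (0 :: ennreal))" for b x
    by simp
  have F_seq: "F k (\<lambda>i. U i \<omega>) = (if ruin_index X0 Y0 U \<omega> = k then 1 else 0)" for k \<omega>
    by (simp add: F_def ruin_index_sequence)
  have G_seq: "G k (\<lambda>i. E i \<omega>) = ennreal ((jump_time E k \<omega> - real k)\<^sup>2)" for k \<omega>
    by (simp add: G_def jump_time_def)
  have "(\<integral>\<^sup>+\<omega>. ennreal ((jump_time E (ruin_index X0 Y0 U \<omega>) \<omega> - real (ruin_index X0 Y0 U \<omega>))\<^sup>2) \<partial>M)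
        = (\<integral>\<^sup>+\<omega>. (\<Sum>k\<le>n. F k (\<lambda>i. U i \<omega>) * G k (\<lambda>i. E i \<omega>)) \<partial>M)"
    using ruin_index_le[of X0 Y0 U] by (intro nn_integral_cong) (simp add: F_seq G_seq n_def delta)
  also have "\<dots> = (\<Sum>k\<le>n. \<integral>\<^sup>+\<omega>. F k (\<lambda>i. U i \<omega>) * G k (\<lambda>i. E i \<omega>) \<partial>M)"
    by (rule nn_integral_sum) measurable
  also have "\<dots> = (\<Sum>k\<le>n. (\<integral>\<^sup>+\<omega>. F k (\<lambda>i. U i \<omega>) \<partial>M) * (\<integral>\<^sup>+\<omega>. G k (\<lambda>i. E i \<omega>) \<partial>M))"
    by (simp add: nn_integral_indep_case_sum_mult[OF indep])
  also have "\<dots> = (\<Sum>k\<le>n. (\<integral>\<^sup>+\<omega>. F k (\<lambda>i. U i \<omega>) \<partial>M) * ennreal (real k))"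
    by (simp add: G_seq nn_integral_jump_time_deviation_sq[OF indep_vars_Inl_of_case_sum[OF indep] exp])
  also have "\<dots> \<le> (\<Sum>k\<le>n. (\<integral>\<^sup>+\<omega>. F k (\<lambda>i. U i \<omega>) \<partial>M) * ennreal (real n))"
    by (intro sum_mono mult_left_mono) auto
  also have "\<dots> = (\<integral>\<^sup>+\<omega>. (\<Sum>k\<le>n. F k (\<lambda>i. U i \<omega>)) \<partial>M) * ennreal (real n)"
    by (simp add: nn_integral_sum sum_distrib_right)
  also have "(\<integral>\<^sup>+\<omega>. (\<Sum>k\<le>n. F k (\<lambda>i. U i \<omega>)) \<partial>M) = 1"
    using ruin_index_le[of X0 Y0 U] by (simp add: F_seq n_def emeasure_space_1)
  finally show ?thesis by (simp add: n_def)
qed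

lemma (in prob_space) nn_integral_ruin_time_poisson_gap_sq_le:
  assumes indep: "indep_vars (\<lambda>_. borel) (case_sum E U) UNIV"
    and exp: "\<And>i. distributed M lborel (E i) (exponential_density 1)"
    and [measurable]: "\<And>k. U k \<in> borel_measurable M" and "0 < N"
  shows "(\<integral>\<^sup>+\<omega>. ennreal ((c * (ruin_time N X0 Y0 E U \<omega> - scaled_count N E (ruin_time N X0 Y0 E U \<omega>) \<omega>))\<^sup>2) \<partial>M)
           \<le> ennreal (c\<^sup>2 * real (X0 + Y0) / (real N)\<^sup>2)"
proof -
  let ?K = "ruin_index X0 Y0 U"
  have [measurable]: "E k \<in> borel_measurable M" for k
    using distributed_measurable[OF exp] by simp
  have "AE \<omega> in M. 0 < E i \<omega>" for i
    using AE_prob_1[of "{\<omega> \<in> space M. 0 < E i \<omega>}"] exponential_distributedD_gt[OF exp, of 0 i]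
    by simp
  then have "AE \<omega> in M. \<forall>i. 0 < E i \<omega>"
    by (simp add: AE_all_countable)
  then have "AE \<omega> in M.
      ennreal ((c * (ruin_time N X0 Y0 E U \<omega> - scaled_count N E (ruin_time N X0 Y0 E U \<omega>) \<omega>))\<^sup>2)
        = ennreal (c\<^sup>2 / (real N)\<^sup>2) * ennreal ((jump_time E (?K \<omega>) \<omega> - real (?K \<omega>))\<^sup>2)"
  proof eventually_elim
    case (elim \<omega>)
    then have pos: "\<And>i. 0 < E i \<omega>" by simp
    have "scaled_count N E (ruin_time N X0 Y0 E U \<omega>) \<omega> = real (?K \<omega>) / real N"
      by (simp add: scaled_count_def poisson_count_ruin_time[of E \<omega>, OF pos \<open>0 < N\<close>])
    then show ?case
      by (simp add: ruin_time_eq_jump_time[of E \<omega>, OF pos \<open>0 < N\<close>] ennreal_mult[symmetric]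
          power_mult_distrib power_divide diff_divide_distrib[symmetric])
  qed
  then have "(\<integral>\<^sup>+\<omega>. ennreal ((c * (ruin_time N X0 Y0 E U \<omega> - scaled_count N E (ruin_time N X0 Y0 E U \<omega>) \<omega>))\<^sup>2) \<partial>M)
      = ennreal (c\<^sup>2 / (real N)\<^sup>2) * (\<integral>\<^sup>+\<omega>. ennreal ((jump_time E (?K \<omega>) \<omega> - real (?K \<omega>))\<^sup>2) \<partial>M)"
    by (simp add: nn_integral_cong_AE nn_integral_cmult)
  also have "\<dots> \<le> ennreal (c\<^sup>2 / (real N)\<^sup>2) * ennreal (real (X0 + Y0))"
    by (intro mult_left_mono nn_integral_jump_time_ruin_index_sq_le[OF indep exp]) auto
  also have "\<dots> = ennreal (c\<^sup>2 * real (X0 + Y0) / (real N)\<^sup>2)"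
    by (subst ennreal_mult[symmetric]) auto
  finally show ?thesis .
qed

theorem mainTheorem12:
  fixes M :: "'a measure"
    and E U :: "nat \<Rightarrow> 'a \<Rightarrow> real"
    and X0 Y0 :: "nat \<Rightarrow> nat"
    and T :: real
    and \<mu> :: "real measure"
  assumes "prob_space M"
    and "prob_space.indep_vars M (\<lambda>_. borel) (case_sum E U) UNIV"
    and "\<And>k. distributed M lborel (E k) (exponential_density 1)"
    and "\<And>k. distributed M lborel (U k) (indicator {0..1})"
    and "\<And>N. 0 < N \<Longrightarrow> real (X0 N) / real N + real (Y0 N) / real N = T"
    and "real_distribution \<mu>"
  defines "Shat \<equiv> \<lambda>N \<omega>. real N powr (1/4) *
             (T - scaled_count N E (ruin_time N (X0 N) (Y0 N) E U \<omega>) \<omega>)"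
    and "S \<equiv> \<lambda>N \<omega>. real N powr (1/4) * (T - ruin_time N (X0 N) (Y0 N) E U \<omega>)"
  shows "(\<forall>N>0. (\<integral>\<^sup>+ \<omega>. ennreal ((Shat N \<omega> - S N \<omega>)\<^sup>2) \<partial>M)
                   \<le> ennreal (T * real N powr (-1/2)))
       \<and> (weak_conv_m (\<lambda>N. distr M borel (Shat N)) \<mu>
            \<longleftrightarrow> weak_conv_m (\<lambda>N. distr M borel (S N)) \<mu>)"
proof -
  interpret prob_space M by fact
  have [measurable]: "E k \<in> borel_measurable M" "U k \<in> borel_measurable M" for k
    using distributed_measurable[OF assms(3)] distributed_measurable[OF assms(4)] by simp_all
  define c where "c N = T * real N powr (-1/2)" for N :: nat
  have close: "(\<integral>\<^sup>+ \<omega>. ennreal ((Shat N \<omega> - S N \<omega>)\<^sup>2) \<partial>M) \<le> ennreal (c N)" if "0 < N" for N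
  proof -
    have "(real N powr (1/4))\<^sup>2 * real (X0 N + Y0 N) / (real N)\<^sup>2 = c N"
      using assms(5)[OF that] that
      by (simp add: c_def powr_power powr_minus_divide power2_eq_square field_simps flip: powr_add)
    moreover have "Shat N \<omega> - S N \<omega> = real N powr (1/4) *
        (ruin_time N (X0 N) (Y0 N) E U \<omega> - scaled_count N E (ruin_time N (X0 N) (Y0 N) E U \<omega>) \<omega>)" for \<omega>
      by (simp add: Shat_def S_def algebra_simps)
    ultimately show ?thesis
      using nn_integral_ruin_time_poisson_gap_sq_le[OF assms(2,3) _ that, of "real N powr (1/4)" "X0 N" "Y0 N"]
      by simp
  qed
  moreover have "0 \<le> c N" for N
    using assms(5)[of 1] by (simp add: c_def)
  moreover have "c \<longlonglongrightarrow> 0"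
    unfolding c_def by real_asymp
  moreover have [measurable]: "Shat N \<in> borel_measurable M" "S N \<in> borel_measurable M" for N
    unfolding Shat_def S_def scaled_count_def by measurable
  ultimately show ?thesis
    using weak_conv_m_of_L2_close[OF assms(1) _ _ assms(6), of Shat S c]
          weak_conv_m_of_L2_close[OF assms(1) _ _ assms(6), of S Shat c]
    by (auto simp: c_def power2_commute)
qed

end
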